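(* Let $r_0,\dots,r_{f-1}$ be integers in $[1,p]$, let $J\subset\{0,\dots,f-1\}$, and set $h_i=r_i$ if $i\in J$, $h_i=0$ if $i\notin J$. Fix $a,b\in k_E^\times$. Let $\overline{\mathfrak M}$ be an extension of $\overline{\mathfrak M}(h_0,\dots,h_{f-1};a)$ by $\overline{\mathfrak M}(r_0-h_0,\dots,r_{f-1}-h_{f-1};b)$. Then one can choose $k_E[[u]]$-bases $e_i,f_i$ of $\overline{\mathfrak M}_i$ such that $$\varphi(e_{i-1})=(b)_iu^{r_i-h_i}e_i,\qquad\varphi(f_{i-1})=(a)_iu^{h_i}f_i+x_ie_i$$ with each $x_i\in k_E[[u]]$ a polynomial of degree $<h_i$, except in the following cases: (i) $(r_0,\dots,r_{f-1})\in\mathcal P$, $J=\{i: r_{i-1}\ne p\}$ and $a=b$; or (ii) $p=2$, $(r_0,\dots,r_{f-1})=(2,\dots,2)$, $J=\{0,\dots,f-1\}$ and $a=b$. In these exceptional cases, for any fixed $i_0\in J$, the $x_i$ may be taken to be polynomials of degree $<h_i$ for all $i\ne i_0$, and $x_{i_0}$ the sum of a polynomial of degree $<h_{i_0}$ and a (possibly zero) monomial of degree $p$ (in case (i)) or degree $4$ (in case (ii)).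
   Context: $K/\mathbb Q_p$ is unramified of degree $f$ with residue field $k$, $\mathfrak S=W(k)[[u]]$ with Frobenius $\varphi$ (Witt Frobenius, $u\mapsto u^p$). $E$ is a finite extension of $\mathbb Q_p$ containing all embeddings of $K$, with integers $\mathcal O_E$ and residue field $k_E$. Fix $\kappa_0\colon K\hookrightarrow E$, $\kappa_{s+1}^p\equiv\kappa_s\pmod p$ (indices mod $f$); $\varepsilon_s\in W(k)\otimes_{\mathbb Z_p}\mathcal O_E$ is the idempotent with $(x\otimes1)\varepsilon_s=(1\otimes\kappa_s(x))\varepsilon_s$, and $M_s=\varepsilon_sM$, so $\mathfrak S\otimes_{\mathbb Z_p}k_E=\prod_sk_E[[u]]$ and $\varphi$ maps the $(s-1)$-component to the $s$-component. For integers $r_i\ge0$ and $a\in k_E^\times$, $\overline{\mathfrak M}(r_0,\dots,r_{f-1};a)$ is the free rank one $\mathfrak S\otimes_{\mathbb Z_p}k_E$-module with semilinear $\varphi$ such that the $i$-th component is generated by $e_i$ and $\varphi(e_{i-1})=(a)_iu^{r_i}e_i$, where $(a)_i=a$ if $i\equiv0\pmod f$ and $(a)_i=1$ otherwise. An extension of $\mathfrak A$ by $\mathfrak B$ is a short exact sequence $0\to\mathfrak B\to\overline{\mathfrak M}\to\mathfrak A\to0$ of $\mathfrak S\otimes k_E$-modules with $k_E$-linear semilinear $\varphi$. $\mathcal P$ is the set of $f$-tuples $(r_0,\dots,r_{f-1})$ with $r_i\in\{1,p-1,p\}$ such that (indices mod $f$) $r_i=p\Rightarrow r_{i+1}=1$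 and $r_i\in\{1,p-1\}\Rightarrow r_{i+1}\in\{p-1,p\}$. *)

theory Defs
  imports Main "HOL-Computational_Algebra.Formal_Power_Series"
begin

text \<open>Indices are taken in {0..<f}; the predecessor of i is (i-1) mod f.\<close>
definition prv :: "nat \<Rightarrow> nat \<Rightarrow> nat" where
  "prv f i = (i + f - 1) mod f"

definition coefi :: "'k::one \<Rightarrow> nat \<Rightarrow> 'k" where
  "coefi a i = (if i = 0 then a else 1)"

text \<open>Frobenius on k_E[[u]] (from the (s-1)-component to the s-component):
  k_E-linear, u maps to u^p.\<close>
definition frob :: "nat \<Rightarrow> 'k::zero fps \<Rightarrow> 'k fps" where
  "frob p g = Abs_fps (\<lambda>n. if p dvd n then fps_nth g (n div p) else 0)"

text \<open>Frobenius of the rank-one module M(r_0,...,r_{f-1}; a) in coordinates w.r.t. the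
  basis (e_i): phi(g e_{i-1}) = frob(g) (a)_i u^{r_i} e_i.\<close>
definition phiR :: "nat \<Rightarrow> (nat \<Rightarrow> nat) \<Rightarrow> 'k::field \<Rightarrow> nat \<Rightarrow> 'k fps \<Rightarrow> 'k fps" where
  "phiR p r a i g = fps_const (coefi a i) * fps_X ^ (r i) * frob p g"

definition Pset :: "nat \<Rightarrow> nat \<Rightarrow> (nat \<Rightarrow> nat) set" where
  "Pset p f = {r. \<forall>i<f. r i \<in> {1, p - 1, p}
       \<and> (r i = p \<longrightarrow> r (Suc i mod f) = 1)
       \<and> (r i \<in> {1, p - 1} \<longrightarrow> r (Suc i mod f) \<in> {p - 1, p})}"

definition deg_less :: "'k::zero fps \<Rightarrow> nat \<Rightarrow> bool" where
  "deg_less x d \<longleftrightarrow> (\<forall>n\<ge>d. fps_nth x n = 0)"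

text \<open>An extension 0 -> B -> M -> A -> 0 with B = M(rB; b), A = M(rA; a), given componentwise:
  M_i = M i (submodules of an ambient k_E[[u]]-module, scalar multiplication scale),
  phi i : M_{i-1} -> M_i additive and frob-semilinear, iota i : B_i = k_E[[u]] -> M_i,
  prj i : M_i -> A_i = k_E[[u]] (coordinates w.r.t. the standard generators e_i of B, A),
  exact and compatible with phi.\<close>
definition is_extension ::
  "nat \<Rightarrow> nat \<Rightarrow> (nat \<Rightarrow> nat) \<Rightarrow> 'k::field \<Rightarrow> (nat \<Rightarrow> nat) \<Rightarrow> 'k
   \<Rightarrow> ('k fps \<Rightarrow> 'm::ab_group_add \<Rightarrow> 'm) \<Rightarrow> (nat \<Rightarrow> 'm set) \<Rightarrow> (nat \<Rightarrow> 'm \<Rightarrow> 'm)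
   \<Rightarrow> (nat \<Rightarrow> 'k fps \<Rightarrow> 'm) \<Rightarrow> (nat \<Rightarrow> 'm \<Rightarrow> 'k fps) \<Rightarrow> bool" where
  "is_extension p f rA a rB b scale M phi iota prj \<longleftrightarrow>
     module scale \<and>
     (\<forall>i<f. module.subspace scale (M i)) \<and>
     (\<forall>i<f. \<forall>x\<in>M (prv f i). phi i x \<in> M i) \<and>
     (\<forall>i<f. \<forall>x\<in>M (prv f i). \<forall>y\<in>M (prv f i). phi i (x + y) = phi i x + phi i y) \<and>
     (\<forall>i<f. \<forall>c. \<forall>x\<in>M (prv f i). phi i (scale c x) = scale (frob p c) (phi i x)) \<and>
     (\<forall>i<f. module_hom (*) scale (iota i) \<and> inj (iota i) \<and> range (iota i) \<subseteq> M i) \<and>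
     (\<forall>i<f. (\<forall>x\<in>M i. \<forall>y\<in>M i. prj i (x + y) = prj i x + prj i y) \<and>
            (\<forall>c. \<forall>x\<in>M i. prj i (scale c x) = c * prj i x) \<and>
            prj i ` M i = UNIV \<and> {x \<in> M i. prj i x = 0} = range (iota i)) \<and>
     (\<forall>i<f. \<forall>g. phi i (iota (prv f i) g) = iota i (phiR p rB b i g)) \<and>
     (\<forall>i<f. \<forall>x\<in>M (prv f i). prj i (phi i x) = phiR p rA a i (prj (prv f i) x))"

definition good_bases ::
  "nat \<Rightarrow> nat \<Rightarrow> (nat \<Rightarrow> nat) \<Rightarrow> 'k::field \<Rightarrow> (nat \<Rightarrow> nat) \<Rightarrow> 'k
   \<Rightarrow> ('k fps \<Rightarrow> 'm::ab_group_add \<Rightarrow> 'm) \<Rightarrow> (nat \<Rightarrow> 'm set) \<Rightarrow> (nat \<Rightarrow> 'm \<Rightarrow> 'm)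
   \<Rightarrow> (nat \<Rightarrow> 'k fps \<Rightarrow> 'm) \<Rightarrow> (nat \<Rightarrow> 'm) \<Rightarrow> (nat \<Rightarrow> 'm) \<Rightarrow> (nat \<Rightarrow> 'k fps) \<Rightarrow> bool" where
  "good_bases p f rA a rB b scale M phi iota e fb x \<longleftrightarrow>
     (\<forall>i<f. e i \<in> M i \<and> fb i \<in> M i \<and>
        (\<forall>m\<in>M i. \<exists>!cd. m = scale (fst cd) (e i) + scale (snd cd) (fb i)) \<and>
        range (iota i) = range (\<lambda>c. scale c (e i)) \<and>
        phi i (e (prv f i)) = scale (fps_const (coefi b i) * fps_X ^ rB i) (e i) \<and>
        phi i (fb (prv f i)) = scale (fps_const (coefi a i) * fps_X ^ rA i) (fb i)
                               + scale (x i) (e i))"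

end

theory Submission
  imports Defs
begin

text \<open>
  Start from the basis \<open>e i = \<iota>(1)\<close> of the subobject and any lift \<open>fb0 i\<close>
  of the generator of the quotient; then \<open>\<phi>(fb0 (i-1)) = (a)_i u^{h i} fb0 i + x0 i \<cdot> e i\<close>.
  Replacing \<open>fb0 i\<close> by \<open>fb0 i + Y i \<cdot> e i\<close> turns \<open>x0 i\<close> into
  \<open>x0 i - (a)_i u^{h i} Y i + (b)_i u^{r i - h i} \<phi>(Y (i-1))\<close>. Asking the coefficients of
  degree \<open>\<ge> h i\<close> to vanish is an affine recursion \<open>y n = c n + \<beta> n \<cdot> y (step n)\<close> for
  the coefficients \<open>y (i, k)\<close> of the \<open>Y i\<close>, along a partial map \<open>step\<close> on nodes \<open>(i, k)\<close>.

  Next the graph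
  of \<open>step\<close> is analysed: all orbits settle, the multiplier of every cycle is \<open>b / a\<close>, and
  cycles exist only for the two exceptional shapes of \<open>(r, J)\<close>. In the exceptional cases
  every cycle passes through one node over \<open>i0\<close>; cutting it leaves a single surviving
  monomial of degree \<open>p\<close> (resp. \<open>4\<close>).
\<close>


section \<open>Iterating a partial map\<close>

fun itr :: "('n \<Rightarrow> 'n option) \<Rightarrow> nat \<Rightarrow> 'n \<Rightarrow> 'n option" where
  "itr G 0 n = Some n"
| "itr G (Suc t) n = (case G n of None \<Rightarrow> None | Some m \<Rightarrow> itr G t m)"

lemma itr_add: "itr G (s + t) n = Option.bind (itr G s n) (itr G t)"
  by (induction s arbitrary: n) (auto split: option.split)

lemma itr_Suc_right: "itr G (Suc t) n = Option.bind (itr G t n) G"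
proof -
  have "itr G (Suc 0) = G" by (rule ext) (simp split: option.split)
  then show ?thesis using itr_add[of G t "Suc 0" n] by simp
qed

lemma itr_prefix: "itr G t n \<noteq> None \<Longrightarrow> s \<le> t \<Longrightarrow> itr G s n \<noteq> None"
  using itr_add[of G s "t - s" n] by (cases "itr G s n") auto

lemma periodic_orbit: "itr G d v = Some v \<Longrightarrow> itr G t v = Some w \<Longrightarrow> itr G d w = Some w"
  using itr_add[of G t d v] itr_add[of G d t v] by (simp add: add.commute)

lemma periodic_defined:
  assumes per: "itr G d v = Some v" and d: "0 < d"
  shows "itr G t v \<noteq> None"
proof (induction t)
  case 0 then show ?case by simp
next
  case (Suc t)
  then obtain w where w: "itr G t v = Some w" by auto
  have "G w \<noteq> None"
  proof
    assume "G w = None"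
    with d have "itr G d w = None" by (cases d) auto
    with periodic_orbit[OF per w] show False by simp
  qed
  then show ?case using w itr_Suc_right[of G t v] by auto
qed

lemma itr_restrict:
  assumes "\<And>n. G' n \<noteq> None \<Longrightarrow> G' n = G n"
  shows "itr G' t n \<noteq> None \<Longrightarrow> itr G' t n = itr G t n"
  by (induction t arbitrary: n) (use assms in \<open>auto split: option.splits\<close>)

text \<open>This is the finiteness condition under which affine recursions
  along \<open>G\<close> can be solved.\<close>
definition settles :: "('n \<Rightarrow> 'n option) \<Rightarrow> nat \<Rightarrow> 'n \<Rightarrow> bool" where
  "settles G F n \<longleftrightarrow> (\<exists>t. itr G t n = None) \<or> (\<exists>t u. itr G t n = Some u \<and> itr G F u = Some u)"

lemma settles_restrict:
  assumes sub: "\<And>n. G' n \<noteq> None \<Longrightarrow> G' n = G n" and set: "settles G F n"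
  shows "settles G' F n"
proof -
  have agree: "itr G' t m \<noteq> None \<Longrightarrow> itr G' t m = itr G t m" for t m
    by (rule itr_restrict[OF sub])
  from set consider t where "itr G t n = None" | t u where "itr G t n = Some u" "itr G F u = Some u"
    unfolding settles_def by blast
  then show ?thesis
  proof cases
    case 1
    then have "itr G' t n = None" using agree[of t n] by (cases "itr G' t n") auto
    then show ?thesis unfolding settles_def by blast
  next
    case 2
    show ?thesis
    proof (cases "itr G' t n = None \<or> itr G' F u = None")
      case True
      then have "itr G' (t + F) n = None \<or> itr G' t n = None"
        using agree[of t n] 2 itr_add[of G' t F n] by (cases "itr G' t n") auto
      then show ?thesis unfolding settles_def by blast
    next
      case False
      then show ?thesis using agree[of t n] agree[of F u] 2 unfolding settles_def by auto
    qed
  qed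
qed

lemma cut_destroys_cycles:
  assumes through: "\<And>u. itr G F u = Some u \<Longrightarrow> \<exists>l<F. itr G l u = Some v"
  shows "itr (G(v := None)) F u \<noteq> Some u"
proof
  define G' where "G' = G(v := None)"
  have sub: "G' n \<noteq> None \<Longrightarrow> G' n = G n" for n unfolding G'_def by (cases "n = v") auto
  have agree: "itr G' t n \<noteq> None \<Longrightarrow> itr G' t n = itr G t n" for t n
    using itr_restrict[OF sub] .
  assume "itr (G(v := None)) F u = Some u"
  then have cy': "itr G' F u = Some u" unfolding G'_def .
  then have "itr G F u = Some u" using agree[of F u] by simp
  then obtain l where l: "l < F" "itr G l u = Some v" using through by blast
  have "itr G' l u \<noteq> None" using itr_prefix[of G' F u l] cy' l(1) by simp
  then have "itr G' l u = Some v" using agree[of l u] l(2) by simp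
  then have "itr G' (Suc l) u = None" using itr_Suc_right[of G' l u] by (simp add: G'_def)
  then show False using itr_prefix[of G' F u "Suc l"] cy' l(1) by simp
qed

section \<open>Affine recursions along a partial map\<close>

text \<open>We solve \<open>y n = c n + \<beta> n * y (G n)\<close> (with \<open>y None = 0\<close>). \<open>V G c \<beta> N n\<close> is the value
  obtained by unfolding the recursion \<open>N\<close> times and putting \<open>0\<close> at the end.\<close>
fun V :: "('n \<Rightarrow> 'n option) \<Rightarrow> ('n \<Rightarrow> 'k::field) \<Rightarrow> ('n \<Rightarrow> 'k) \<Rightarrow> nat \<Rightarrow> 'n \<Rightarrow> 'k" where
  "V G c \<beta> 0 n = 0"
| "V G c \<beta> (Suc N) n = c n + \<beta> n * (case G n of None \<Rightarrow> 0 | Some m \<Rightarrow> V G c \<beta> N m)"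

lemma V_Suc_right:
  "itr G N m \<noteq> None \<Longrightarrow>
   V G c \<beta> (Suc N) m = V G c \<beta> N m + (\<Prod>l<N. \<beta> (the (itr G l m))) * c (the (itr G N m))"
proof (induction N arbitrary: m)
  case 0
  then show ?case by (auto split: option.split)
next
  case (Suc N)
  then obtain m' where m': "G m = Some m'" and def: "itr G N m' \<noteq> None"
    by (auto split: option.splits)
  have "\<beta> m * (\<Prod>l<N. \<beta> (the (itr G l m'))) = (\<Prod>l<Suc N. \<beta> (the (itr G l m)))"
    using m' by (simp add: prod.lessThan_Suc_shift del: prod.lessThan_Suc)
  then show ?case using Suc.IH[OF def] m' by (simp add: algebra_simps)
qed

definition cycle_mult :: "('n \<Rightarrow> 'n option) \<Rightarrow> ('n \<Rightarrow> 'k::field) \<Rightarrow> nat \<Rightarrow> 'n \<Rightarrow> 'k" where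
  "cycle_mult G \<beta> F u = (\<Prod>l<F. \<beta> (the (itr G l u)))"

lemma cycle_shift:
  fixes \<beta> c :: "'n \<Rightarrow> 'k::field"
  assumes F: "0 < F" and cy: "itr G F u = Some u" and Gu: "G u = Some m"
  defines "P \<equiv> \<Prod>l<F - 1. \<beta> (the (itr G l m))"
  shows "itr G F m = Some m"
    and "V G c \<beta> F u = c u + \<beta> u * V G c \<beta> (F - 1) m"
    and "V G c \<beta> F m = V G c \<beta> (F - 1) m + P * c u"
    and "cycle_mult G \<beta> F u = \<beta> u * P"
    and "cycle_mult G \<beta> F m = P * \<beta> u"
proof -
  have FF: "F = Suc (F - 1)" using F by simp
  have cy_back: "itr G (F - 1) m = Some u"
    using cy Gu FF by (metis itr.simps(2) option.simps(5))
  show "itr G F m = Some m"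
    using itr_Suc_right[of G "F - 1" m] cy_back Gu by (subst FF) simp
  show "V G c \<beta> F u = c u + \<beta> u * V G c \<beta> (F - 1) m"
    using Gu by (subst FF) simp
  show "V G c \<beta> F m = V G c \<beta> (F - 1) m + P * c u"
    using V_Suc_right[of G "F - 1" m c \<beta>] cy_back unfolding P_def by (subst FF) simp
  show "cycle_mult G \<beta> F u = \<beta> u * P"
    unfolding cycle_mult_def P_def using Gu
    by (subst FF) (simp add: prod.lessThan_Suc_shift del: prod.lessThan_Suc)
  show "cycle_mult G \<beta> F m = P * \<beta> u"
    unfolding cycle_mult_def P_def using cy_back by (subst FF) (simp add: prod.lessThan_Suc)
qed

text \<open>\<open>W cy Z G c \<beta> N n\<close> unfolds the recursion at most \<open>N\<close> times, stopping with value \<open>Z\<close>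
  at the points marked by \<open>cy\<close> (the periodic points, where the value is prescribed).\<close>
fun W :: "('n \<Rightarrow> bool) \<Rightarrow> ('n \<Rightarrow> 'k) \<Rightarrow> ('n \<Rightarrow> 'n option) \<Rightarrow> ('n \<Rightarrow> 'k) \<Rightarrow> ('n \<Rightarrow> 'k)
    \<Rightarrow> nat \<Rightarrow> 'n \<Rightarrow> 'k::field" where
  "W cy Z G c \<beta> 0 n = Z n"
| "W cy Z G c \<beta> (Suc N) n =
     (if cy n then Z n else c n + \<beta> n * (case G n of None \<Rightarrow> 0 | Some m \<Rightarrow> W cy Z G c \<beta> N m))"

lemma W_marked: "cy n \<Longrightarrow> W cy Z G c \<beta> N n = Z n"
  by (cases N) auto

lemma W_stable:
  "itr G t n = None \<or> (\<exists>u. itr G t n = Some u \<and> cy u) \<Longrightarrow>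
   \<exists>N. \<forall>N'\<ge>N. W cy Z G c \<beta> N' n = W cy Z G c \<beta> N n"
proof (induction t arbitrary: n)
  case 0
  then show ?case by (intro exI[of _ 0] allI impI) (simp add: W_marked)
next
  case (Suc t)
  show ?case
  proof (cases "cy n")
    case True
    then show ?thesis by (intro exI[of _ 0] allI impI) (simp add: W_marked)
  next
    case unmarked: False
    show ?thesis
    proof (cases "G n")
      case None
      have "W cy Z G c \<beta> N' n = W cy Z G c \<beta> (Suc 0) n" if "Suc 0 \<le> N'" for N'
        using that unmarked None by (cases N') auto
      then show ?thesis by blast
    next
      case (Some m)
      with Suc.prems have "itr G t m = None \<or> (\<exists>u. itr G t m = Some u \<and> cy u)" by simp
      from Suc.IH[OF this] obtain N where N: "\<forall>N'\<ge>N. W cy Z G c \<beta> N' m = W cy Z G c \<beta> N m"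
        by blast
      have "W cy Z G c \<beta> N' n = W cy Z G c \<beta> (Suc N) n" if N': "Suc N \<le> N'" for N'
      proof -
        obtain N'' where "N' = Suc N''" "N \<le> N''" using N' by (cases N') auto
        then show ?thesis using N[rule_format, of N''] unmarked Some by simp
      qed
      then show ?thesis by blast
    qed
  qed
qed

text \<open>On cycles the
  value is forced by a geometric-series identity; elsewhere it is obtained by unfolding the
  recursion until the orbit dies out or enters a cycle.\<close>
lemma affine_recursion_solvable:
  fixes G :: "'n \<Rightarrow> 'n option" and c \<beta> :: "'n \<Rightarrow> 'k::field"
  assumes F: "F > 0"
    and settle: "\<And>n. settles G F n"
    and mult: "\<And>u. itr G F u = Some u \<Longrightarrow> cycle_mult G \<beta> F u \<noteq> 1"
  shows "\<exists>y. \<forall>n. y n = c n + \<beta> n * (case G n of None \<Rightarrow> 0 | Some m \<Rightarrow> y m)"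
proof -
  define cy where "cy u \<longleftrightarrow> itr G F u = Some u" for u
  define Z where "Z u = (if cy u then V G c \<beta> F u / (1 - cycle_mult G \<beta> F u) else 0)" for u
  have Z_rec: "cy m \<and> Z n = c n + \<beta> n * Z m" if n: "cy n" and Gn: "G n = Some m" for n m
  proof -
    note sh = cycle_shift(1)[OF F n[unfolded cy_def] Gn]
      cycle_shift(2,3)[OF F n[unfolded cy_def] Gn, where c = c and \<beta> = \<beta>]
      cycle_shift(4,5)[OF F n[unfolded cy_def] Gn, where \<beta> = \<beta>]
    have "cycle_mult G \<beta> F n \<noteq> 1" using mult n unfolding cy_def by blast
    then show ?thesis using sh n unfolding Z_def cy_def by (auto simp: field_simps)
  qed
  define WW where "WW = W cy Z G c \<beta>"
  have "\<exists>N. \<forall>N'\<ge>N. WW N' n = WW N n" for n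
  proof -
    from settle[of n] obtain t where "itr G t n = None \<or> (\<exists>u. itr G t n = Some u \<and> cy u)"
      unfolding settles_def cy_def by blast
    from W_stable[OF this] show ?thesis unfolding WW_def by blast
  qed
  then obtain S where S: "\<And>n N'. S n \<le> N' \<Longrightarrow> WW N' n = WW (S n) n" by metis
  define y where "y n = WW (S n) n" for n
  have "y n = c n + \<beta> n * (case G n of None \<Rightarrow> 0 | Some m \<Rightarrow> y m)" for n
  proof (cases "cy n")
    case True
    obtain m where Gn: "G n = Some m"
      using True F unfolding cy_def by (cases "G n"; cases F) auto
    then show ?thesis using Z_rec[OF True Gn] True unfolding y_def WW_def by (simp add: W_marked)
  next
    case False
    define N where "N = max (S n) (Suc (case G n of None \<Rightarrow> 0 | Some m \<Rightarrow> S m))"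
    obtain N' where N': "N = Suc N'" unfolding N_def by (cases "S n") auto
    have "y n = WW N n" unfolding y_def using S[of n N] by (simp add: N_def)
    also have "\<dots> = c n + \<beta> n * (case G n of None \<Rightarrow> 0 | Some m \<Rightarrow> WW N' m)"
      using False N' unfolding WW_def by simp
    also have "(case G n of None \<Rightarrow> 0 | Some m \<Rightarrow> WW N' m)
             = (case G n of None \<Rightarrow> 0 | Some m \<Rightarrow> y m)"
    proof (cases "G n")
      case (Some m)
      have "S m \<le> N'" using N' Some unfolding N_def by simp
      then show ?thesis using S[of m N'] Some unfolding y_def by simp
    qed simp
    finally show ?thesis .
  qed
  then show ?thesis by blast
qed

section \<open>Cyclic indices\<close>

lemma prv_lt: "i < f \<Longrightarrow> prv f i < f"
  unfolding prv_def by simp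

lemma prv_pos: "0 < m \<Longrightarrow> m < f \<Longrightarrow> prv f m = m - 1"
proof -
  assume "0 < m" "m < f"
  then have e: "m + f - 1 = (m - 1) + f" by simp
  have "(m - 1 + f) mod f = m - 1" using \<open>m < f\<close> by simp
  then show ?thesis unfolding prv_def e .
qed

lemma prv_zero: "0 < f \<Longrightarrow> prv f 0 = f - 1"
  unfolding prv_def by simp

lemma prv_pow: "i < f \<Longrightarrow> l < f \<Longrightarrow> (prv f ^^ l) i = (if l \<le> i then i - l else f + i - l)"
proof (induction l)
  case 0
  then show ?case by simp
next
  case (Suc l)
  then have IH: "(prv f ^^ l) i = (if l \<le> i then i - l else f + i - l)" by simp
  show ?case
  proof (cases "Suc l \<le> i")
    case True
    then show ?thesis using IH Suc.prems by (simp add: prv_pos)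
  next
    case False
    show ?thesis
    proof (cases "l = i")
      case True
      then show ?thesis using IH Suc.prems by (simp add: prv_zero)
    next
      case False
      then have "l > i" using \<open>\<not> Suc l \<le> i\<close> by simp
      then show ?thesis using IH Suc.prems by (simp add: prv_pos)
    qed
  qed
qed

lemma prv_pow_f: "i < f \<Longrightarrow> (prv f ^^ f) i = i"
proof -
  assume i: "i < f"
  then have f0: "f = Suc (f - 1)" by simp
  have "(prv f ^^ f) i = prv f ((prv f ^^ (f - 1)) i)"
    by (subst f0) simp
  also have "\<dots> = i"
  proof (cases "f - 1 \<le> i")
    case True
    then have "i = f - 1" using i by simp
    then show ?thesis using i True prv_pow[OF i, of "f-1"] by (simp add: prv_zero)
  next
    case False
    then show ?thesis using i prv_pow[OF i, of "f-1"] by (simp add: prv_pos)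
  qed
  finally show ?thesis .
qed

lemma Suc_mod_prv: "j < f \<Longrightarrow> prv f (Suc j mod f) = j"
proof (cases "Suc j < f")
  case True
  then show ?thesis by (simp add: prv_pos)
next
  case False
  assume "j < f"
  then have "Suc j = f" using False by simp
  then show ?thesis by (simp add: prv_zero)
qed

lemma Suc_prv_mod: "i < f \<Longrightarrow> Suc (prv f i) mod f = i"
proof (cases "i = 0")
  case True
  assume "i < f"
  then show ?thesis using True by (simp add: prv_zero)
next
  case False
  assume "i < f"
  then show ?thesis using False by (simp add: prv_pos)
qed

section \<open>The graph of the coefficient equations\<close>

text \<open>Killing the coefficient of \<open>u^(k + h i)\<close> in \<open>x i\<close> by changing \<open>f i\<close> to
  \<open>f i + Y i \<cdot> e i\<close> fixes the coefficient \<open>k\<close> of \<open>Y i\<close> in terms of the coefficient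
  \<open>k'\<close> of \<open>Y (i-1)\<close> with \<open>p k' = k + h i - (r i - h i)\<close> (coming from \<open>\<phi>(Y (i-1))\<close>), if
  such a \<open>k'\<close> exists. The nodes \<open>(i, k)\<close> and these edges form a partial map \<open>step\<close>.\<close>
locale reduction_graph =
  fixes p f :: nat and r :: "nat \<Rightarrow> nat" and J :: "nat set"
  assumes p2: "2 \<le> p" and f1: "1 \<le> f" and rb: "\<And>i. i < f \<Longrightarrow> 1 \<le> r i \<and> r i \<le> p"
    and Jf: "J \<subseteq> {..<f}"
begin

definition hJ :: "nat \<Rightarrow> nat" where "hJ i = (if i \<in> J then r i else 0)"

definition step :: "nat \<times> nat \<Rightarrow> (nat \<times> nat) option" where
  "step n = (case n of (i,k) \<Rightarrow> if i < f \<and> r i - hJ i \<le> k + hJ i \<and> p dvd (k + hJ i - (r i - hJ i))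
      then Some (prv f i, (k + hJ i - (r i - hJ i)) div p) else None)"

text \<open>On levels \<open>\<le> 1\<close> the level at index \<open>j\<close> is determined: \<open>lvl j\<close>; the possible
  edges between such levels are described by \<open>low_step\<close>.\<close>
definition lvl :: "nat \<Rightarrow> nat" where "lvl j = (if j \<in> J \<and> r j = p then 0 else 1)"

definition low_step :: "nat \<Rightarrow> nat \<Rightarrow> nat \<Rightarrow> bool" where
  "low_step j k k' \<longleftrightarrow> (j \<in> J \<and> r j = p \<and> k = 0 \<and> k' = 1) \<or> (j \<in> J \<and> r j = p - 1 \<and> k = 1 \<and> k' = 1)
     \<or> (j \<notin> J \<and> r j = 1 \<and> k = 1 \<and> k' = 0)"

lemma step_eq:
  assumes "step n = Some m"
  shows "fst n < f \<and> fst m = prv f (fst n) \<and>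
    (if fst n \<in> J then snd n + r (fst n) = p * snd m
     else r (fst n) \<le> snd n \<and> snd n - r (fst n) = p * snd m)"
  using assms by (cases n) (auto simp: step_def hJ_def split: if_splits elim!: dvdE)

lemma step_index: "step n = Some m \<Longrightarrow> fst n < f \<and> fst m = prv f (fst n)"
  using step_eq by blast

lemma step_decreases:
  assumes e: "step n = Some m" and k3: "3 \<le> snd n"
  shows "snd m < snd n"
proof -
  obtain j k where n: "n = (j, k)" by (cases n)
  note E = step_eq[OF e, unfolded n fst_conv snd_conv]
  have k: "snd n = k" using n by simp
  have rj: "1 \<le> r j" "r j \<le> p" using rb E by auto
  show ?thesis
  proof (cases "j \<in> J")
    case True
    then have eq: "k + r j = p * snd m" using E by simp
    show ?thesis
    proof (rule ccontr)
      assume "\<not> snd m < snd n"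
      then have "p * k \<le> p * snd m" using n by simp
      moreover have "p * k \<ge> 2 * k" "p * k \<ge> p * 3" using p2 k3 n by simp_all
      ultimately show False using eq rj p2 by linarith
    qed
  next
    case False
    then have "k - r j = p * snd m" using E by simp
    moreover have "snd m \<le> p * snd m" using p2 by simp
    ultimately show ?thesis using rj k3 k by linarith
  qed
qed

lemma step_low:
  assumes e: "step n = Some m" and k2: "snd n \<le> 2"
  shows "snd m \<le> 2"
proof (rule ccontr)
  assume big: "\<not> snd m \<le> 2"
  obtain j k where n: "n = (j, k)" by (cases n)
  note E = step_eq[OF e, unfolded n fst_conv snd_conv]
  have k: "snd n = k" using n by simp
  have rj: "1 \<le> r j" "r j \<le> p" using rb E by auto
  have big3: "p * 3 \<le> p * snd m" using big by simp
  have big6: "2 * 3 \<le> p * snd m" using mult_le_mono[OF p2, of 3 "snd m"] big by simp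
  show False
  proof (cases "j \<in> J")
    case True
    then have "k + r j = p * snd m" using E by simp
    then show False using big3 rj p2 k2 k by linarith
  next
    case False
    then have "k - r j = p * snd m" using E by simp
    then show False using big6 rj k2 k by linarith
  qed
qed

lemma step_low_step:
  assumes e: "step n = Some m" and k1: "snd n \<le> 1"
  shows "low_step (fst n) (snd n) (snd m)"
proof -
  obtain j k where n: "n = (j, k)" by (cases n)
  note E = step_eq[OF e, unfolded n fst_conv snd_conv]
  have k: "snd n = k" using n by simp
  have rj: "1 \<le> r j" "r j \<le> p" using rb E by auto
  show ?thesis
  proof (cases "j \<in> J")
    case True
    then have eq: "k + r j = p * snd m" using E by simp
    have "snd m \<noteq> 0"
    proof
      assume "snd m = 0"
      then show False using eq rj by simp
    qed
    moreover have "\<not> snd m \<ge> 2"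
    proof
      assume "snd m \<ge> 2"
      then have "p * snd m \<ge> p * 2" by simp
      then show False using eq rj k1 p2 k by linarith
    qed
    ultimately have "snd m = 1" by linarith
    then show ?thesis using eq True k1 n unfolding low_step_def by auto
  next
    case False
    then have "r j \<le> k" "k - r j = p * snd m" using E by auto
    then have "r j = 1" "k = 1" "snd m = 0" using rj k1 p2 n by auto
    then show ?thesis using False n unfolding low_step_def by auto
  qed
qed

lemma low_step_lvl: "low_step j k k' \<Longrightarrow> k = lvl j \<and> k' \<le> 1"
  unfolding low_step_def lvl_def using p2 by auto

lemma step_22:
  assumes e: "step n = Some m" and "snd n = 2" and "snd m = 2"
  shows "p = 2 \<and> fst n \<in> J \<and> r (fst n) = 2"
proof -
  note E = step_eq[OF e, unfolded assms(2,3)]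
  have rj: "1 \<le> r (fst n)" "r (fst n) \<le> p" using rb E by auto
  show ?thesis
  proof (cases "fst n \<in> J")
    case True
    then have "2 + r (fst n) = p * 2" using E by simp
    then show ?thesis using rj True p2 by linarith
  next
    case False
    then have "2 - r (fst n) = p * 2" using E by simp
    then show ?thesis using rj p2 by linarith
  qed
qed

lemma itr_idx: "itr step l n = Some v \<Longrightarrow> fst v = (prv f ^^ l) (fst n)"
proof (induction l arbitrary: n)
  case 0 then show ?case by simp
next
  case (Suc l)
  then obtain m where m: "step n = Some m" "itr step l m = Some v" by (auto split: option.splits)
  have "fst m = prv f (fst n)" using step_index m by simp
  then show ?case using Suc.IH[OF m(2)] by (simp add: funpow_Suc_right del: funpow.simps)
qed

text \<open>\<open>max 2 k\<close> never increases along edges and strictly decreases from levels \<open>\<ge> 3\<close>;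
  hence all periodic nodes have level \<open>\<le> 2\<close>.\<close>
definition potential :: "nat \<times> nat \<Rightarrow> nat" where "potential x = max 2 (snd x)"

lemma potential_step:
  "step x = Some y \<Longrightarrow> potential y \<le> potential x \<and> (3 \<le> snd x \<longrightarrow> potential y < potential x)"
  using step_decreases[of x y] step_low[of x y]
  unfolding potential_def by (cases "3 \<le> snd x") auto

lemma potential_orbit: "itr step t x = Some y \<Longrightarrow> potential y \<le> potential x"
proof (induction t arbitrary: x)
  case 0 then show ?case by simp
next
  case (Suc t)
  then obtain m where m: "step x = Some m" "itr step t m = Some y" by (auto split: option.splits)
  then show ?case using Suc.IH[OF m(2)] potential_step[OF m(1)] by linarith
qed

lemma periodic_low:
  assumes "itr step d v = Some v" "0 < d"
  shows "snd v \<le> 2"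
proof (rule ccontr)
  assume a: "\<not> snd v \<le> 2"
  obtain d' where d: "d = Suc d'" using assms(2) by (cases d) auto
  obtain w where w: "step v = Some w" "itr step d' w = Some v" using assms(1) d by (auto split: option.splits)
  have "potential v \<le> potential w" using potential_orbit[OF w(2)] .
  moreover have "potential w < potential v" using potential_step[OF w(1)] a by auto
  ultimately show False by simp
qed

lemma level1_closed: "itr step t x = Some y \<Longrightarrow> snd x \<le> 1 \<Longrightarrow> snd y \<le> 1"
proof (induction t arbitrary: x)
  case 0 then show ?case by simp
next
  case (Suc t)
  then obtain m where m: "step x = Some m" "itr step t m = Some y" by (auto split: option.splits)
  have "snd m \<le> 1" using low_step_lvl step_low_step[OF m(1) Suc.prems(2)] by auto
  then show ?case using Suc.IH[OF m(2)] by simp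
qed

lemma periodic_level2_step:
  assumes "itr step d v = Some v" "0 < d" "snd v = 2"
  shows "\<exists>w. step v = Some w \<and> snd w = 2"
proof -
  obtain d' where d: "d = Suc d'" using assms(2) by (cases d) auto
  obtain w where w: "step v = Some w" "itr step d' w = Some v" using assms(1) d by (auto split: option.splits)
  have "snd w \<le> 2" using step_low[OF w(1)] assms(3) by simp
  moreover have "\<not> snd w \<le> 1" using level1_closed[OF w(2)] assms(3) by auto
  ultimately show ?thesis using w by auto
qed

lemma periodic_level2:
  assumes "itr step d v = Some v" "0 < d" "snd v = 2"
  shows "itr step t v = Some w \<Longrightarrow> snd w = 2"
proof (induction t arbitrary: w)
  case 0 then show ?case using assms by simp
next
  case (Suc t)
  obtain w' where w': "itr step t v = Some w'" using Suc.prems itr_Suc_right[of step t v] by (cases "itr step t v") auto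
  then have "step w' = Some w" using Suc.prems itr_Suc_right[of step t v] by simp
  moreover have "snd w' = 2" using Suc.IH[OF w'] .
  moreover have "itr step d w' = Some w'" using periodic_orbit[OF assms(1) w'] .
  ultimately show ?case using periodic_level2_step[of d w'] assms(2) by auto
qed

lemma periodic_lvl:
  assumes "itr step d v = Some v" "0 < d" "snd v \<le> 1"
  shows "snd v = lvl (fst v)"
proof -
  obtain d' where d: "d = Suc d'" using assms(2) by (cases d) auto
  obtain w where w: "step v = Some w" using assms(1) d by (auto split: option.splits)
  show ?thesis using low_step_lvl step_low_step[OF w assms(3)] by auto
qed

lemma periodic_period_f:
  assumes "itr step d v = Some v" "0 < d" "fst v < f"
  shows "itr step f v = Some v"
proof -
  obtain w where w: "itr step f v = Some w" using periodic_defined[OF assms(1,2), of f] by auto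
  have fw: "fst w = fst v" using itr_idx[OF w] prv_pow_f[OF assms(3)] by simp
  have pw: "itr step d w = Some w" using periodic_orbit[OF assms(1) w] .
  have "snd v \<le> 2" using periodic_low[OF assms(1,2)] .
  then consider "snd v = 2" | "snd v \<le> 1" by linarith
  then have "snd w = snd v"
  proof cases
    case 1 then show ?thesis using periodic_level2[OF assms(1,2) 1 w] by simp
  next
    case 2
    then have "snd w \<le> 1" using level1_closed[OF w] by simp
    then show ?thesis using periodic_lvl[OF pw assms(2)] periodic_lvl[OF assms(1,2) 2] fw by simp
  qed
  then show ?thesis using w fw by (simp add: prod_eq_iff)
qed

lemma level2_closed:
  "itr step t n = Some w \<Longrightarrow> fst n < f \<Longrightarrow> snd n \<le> 2 \<Longrightarrow> fst w < f \<and> snd w \<le> 2"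
proof (induction t arbitrary: n)
  case 0 then show ?case by simp
next
  case (Suc t)
  then obtain m where m: "step n = Some m" "itr step t m = Some w" by (auto split: option.splits)
  have "fst m < f" "snd m \<le> 2"
    using step_index[OF m(1)] step_low[OF m(1)] Suc.prems by (auto simp: prv_lt)
  then show ?case using Suc.IH[OF m(2)] by simp
qed

text \<open>Orbits inside the finite set of low nodes settle, by the pigeonhole principle.\<close>
lemma low_orbit_settles:
  assumes nf: "fst n < f" and n2: "snd n \<le> 2"
  shows "settles step f n"
proof (cases "\<exists>t. itr step t n = None")
  case True
  then show ?thesis unfolding settles_def by blast
next
  case False
  define g where "g t = the (itr step t n)" for t
  have gS: "itr step t n = Some (g t)" for t using False unfolding g_def by auto
  have sub: "g ` {..3 * f} \<subseteq> {..<f} \<times> {..2}"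
  proof (rule image_subsetI)
    fix t
    show "g t \<in> {..<f} \<times> {..2}" using level2_closed[OF gS nf n2, of t] by (cases "g t") auto
  qed
  have "\<not> inj_on g {..3 * f}"
  proof
    assume "inj_on g {..3 * f}"
    then have "card (g ` {..3 * f}) = Suc (3 * f)" by (simp add: card_image)
    moreover have "card (g ` {..3 * f}) \<le> card ({..<f} \<times> {..2::nat})"
      using sub by (intro card_mono) auto
    ultimately show False by (simp add: card_cartesian_product)
  qed
  then obtain s t where st: "s < t" "g s = g t"
    unfolding inj_on_def by (metis linorder_neqE_nat)
  then have per: "itr step (t - s) (g s) = Some (g s)"
    using itr_add[of step s "t - s" n] gS[of s] gS[of t] by simp
  have "itr step f (g s) = Some (g s)"
    using periodic_period_f[OF per] st level2_closed[OF gS nf n2] by simp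
  then show ?thesis using gS[of s] unfolding settles_def by blast
qed

text \<open>Every orbit settles with period \<open>f\<close>: high levels decrease until the orbit dies or
  reaches the low nodes.\<close>
lemma step_settles: "settles step f n"
proof (induction "snd n" arbitrary: n rule: less_induct)
  case less
  show ?case
  proof (cases "step n")
    case None
    then have "itr step (Suc 0) n = None" by simp
    then show ?thesis unfolding settles_def by blast
  next
    case (Some m)
    show ?thesis
    proof (cases "3 \<le> snd n")
      case True
      then have "settles step f m" using less step_decreases[OF Some] by blast
      moreover have "itr step (Suc t) n = itr step t m" for t using Some by simp
      ultimately show ?thesis unfolding settles_def by metis
    next
      case False
      then show ?thesis using low_orbit_settles step_index[OF Some] by simp
    qed
  qed
qed

lemma cycle_visits:
  assumes "itr step f u = Some u" "fst u < f" "j < f"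
  shows "\<exists>l<f. \<exists>k. itr step l u = Some (j, k)"
proof -
  define i where "i = fst u"
  define l where "l = (if j \<le> i then i - j else f + i - j)"
  have lf: "l < f" unfolding l_def i_def using assms by auto
  obtain w where w: "itr step l u = Some w" using periodic_defined[OF assms(1)] f1 by fastforce
  have "fst w = (prv f ^^ l) i" using itr_idx[OF w] i_def by simp
  also have "\<dots> = j" using prv_pow[of i f l] lf assms unfolding l_def i_def by auto
  finally show ?thesis using lf w by (metis prod.collapse)
qed

lemma cycle_node:
  assumes cy: "itr step f u = Some u" and uf: "fst u < f" and j: "j < f"
  obtains l k w where "l < f" "itr step l u = Some (j, k)" "itr step (Suc l) u = Some w"
    "step (j, k) = Some w"
proof -
  obtain l k where lk: "l < f" "itr step l u = Some (j, k)" using cycle_visits[OF cy uf j] by blast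
  obtain w where w: "itr step (Suc l) u = Some w" using periodic_defined[OF cy, of "Suc l"] f1 by auto
  have "step (j, k) = Some w" using w lk itr_Suc_right[of step l u] by simp
  then show ?thesis using that lk w by blast
qed

lemma level2_cycle:
  assumes cy: "itr step f u = Some u" and uf: "fst u < f" and u2: "snd u = 2" and j: "j < f"
  shows "p = 2 \<and> j \<in> J \<and> r j = 2 \<and> (\<exists>l<f. itr step l u = Some (j, 2))"
proof -
  have f0: "0 < f" using f1 by simp
  obtain l k w where l: "l < f" and k: "itr step l u = Some (j, k)"
    and w: "itr step (Suc l) u = Some w" and edge: "step (j, k) = Some w"
    by (rule cycle_node[OF cy uf j])
  have "k = 2" using periodic_level2[OF cy f0 u2 k] by simp
  moreover have "snd w = 2" using periodic_level2[OF cy f0 u2 w] .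
  ultimately show ?thesis using step_22[OF edge] l k by auto
qed

lemma low_cycle:
  assumes cy: "itr step f u = Some u" and uf: "fst u < f" and u1: "snd u \<le> 1" and j: "j < f"
  shows "low_step j (lvl j) (lvl (prv f j)) \<and> (\<exists>l<f. itr step l u = Some (j, lvl j))"
proof -
  have f0: "0 < f" using f1 by simp
  obtain l k w where l: "l < f" and k: "itr step l u = Some (j, k)"
    and w: "itr step (Suc l) u = Some w" and edge: "step (j, k) = Some w"
    by (rule cycle_node[OF cy uf j])
  have k1: "k \<le> 1" using level1_closed[OF k u1] by simp
  have "k = lvl j" using periodic_lvl[OF periodic_orbit[OF cy k] f0] k1 by simp
  moreover have "snd w = lvl (prv f j)"
    using periodic_lvl[OF periodic_orbit[OF cy w] f0] level1_closed[OF w u1] step_index[OF edge]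
    by simp
  ultimately show ?thesis using step_low_step[OF edge] k1 l k by auto
qed

lemma cycle_structure:
  assumes cy: "itr step f u = Some u" and uf: "fst u < f"
  shows "(p = 2 \<and> (\<forall>j<f. j \<in> J \<and> r j = 2) \<and> (\<forall>j<f. \<exists>l<f. itr step l u = Some (j, 2)))
     \<or> ((\<forall>j<f. low_step j (lvl j) (lvl (prv f j))) \<and> (\<forall>j<f. \<exists>l<f. itr step l u = Some (j, lvl j)))"
proof -
  have "snd u \<le> 2" using periodic_low[OF cy] f1 by simp
  then consider "snd u = 2" | "snd u \<le> 1" by linarith
  then show ?thesis
  proof cases
    case 1
    then have "p = 2" using level2_cycle[OF cy uf, of 0] f1 by simp
    then show ?thesis using level2_cycle[OF cy uf 1] by blast
  next
    case 2
    then show ?thesis using low_cycle[OF cy uf] by blast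
  qed
qed

lemma cycle_prod_at_zero:
  assumes cy: "itr step f u = Some u" and uf: "fst u < f" and w1: "\<And>j. j \<noteq> 0 \<Longrightarrow> w j = 1"
  shows "(\<Prod>l<f. w (fst (the (itr step l u)))) = (w 0 :: 'a::comm_monoid_mult)"
proof -
  have f0: "0 < f" using f1 by simp
  define i where "i = fst u"
  have idx: "fst (the (itr step l u)) = (if l \<le> i then i - l else f + i - l)" if "l < f" for l
  proof -
    obtain v where v: "itr step l u = Some v" using periodic_defined[OF cy f0, of l] by auto
    show ?thesis using itr_idx[OF v] prv_pow[of i f l] that uf v unfolding i_def by simp
  qed
  have i: "i \<in> {..<f}" using uf i_def by simp
  have "(\<Prod>l<f. w (fst (the (itr step l u)))) = w (fst (the (itr step i u))) * (\<Prod>l\<in>{..<f} - {i}. w (fst (the (itr step l u))))"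
    using prod.remove[OF _ i] by simp
  also have "(\<Prod>l\<in>{..<f} - {i}. w (fst (the (itr step l u)))) = 1"
  proof (rule prod.neutral, intro ballI)
    fix l assume "l \<in> {..<f} - {i}"
    then have "l < f" "l \<noteq> i" by auto
    then have "fst (the (itr step l u)) \<noteq> 0" using idx[of l] i by auto
    then show "w (fst (the (itr step l u))) = 1" using w1 by simp
  qed
  also have "fst (the (itr step i u)) = 0" using idx[of i] i by simp
  finally show ?thesis by simp
qed

lemma low_cycle_shape:
  assumes "\<forall>j<f. low_step j (lvl j) (lvl (prv f j))"
  shows "r \<in> Pset p f \<and> J = {i. i < f \<and> r (prv f i) \<noteq> p}"

proof -
  have Rj: "low_step j (lvl j) (lvl (prv f j))" if "j < f" for j using assms that by blast
  have J1: "j \<in> J \<longleftrightarrow> r (prv f j) \<noteq> p" if j: "j < f" for j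
  proof -
    have pj: "prv f j < f" using prv_lt[OF j] .
    show ?thesis using Rj[OF j] Rj[OF pj] p2 unfolding low_step_def lvl_def by (auto split: if_splits)
  qed
  have P: "r \<in> Pset p f"
    unfolding Pset_def
  proof (intro CollectI allI impI conjI)
    fix i assume i: "i < f"
    define j where "j = Suc i mod f"
    have jf: "j < f" unfolding j_def using i by simp
    have pj: "prv f j = i" unfolding j_def using Suc_mod_prv[OF i] .
    have Ri: "low_step i (lvl i) (lvl (prv f i))" using Rj[OF i] .
    have Rj': "low_step j (lvl j) (lvl i)" using Rj[OF jf] pj by simp
    show "r i \<in> {1, p - 1, p}" using Ri unfolding low_step_def by auto
    show "r i = p \<Longrightarrow> r (Suc i mod f) = 1"
      using Ri Rj' p2 unfolding j_def[symmetric] low_step_def lvl_def by (auto split: if_splits)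
    show "r i \<in> {1, p - 1} \<Longrightarrow> r (Suc i mod f) \<in> {p - 1, p}"
      using Ri Rj' p2 unfolding j_def[symmetric] low_step_def lvl_def by (auto split: if_splits)
  qed
  have "J = {i. i < f \<and> r (prv f i) \<noteq> p}" using J1 Jf by auto
  then show ?thesis using P by simp
qed


text \<open>The two exceptional shapes of the data \<open>(r, J)\<close> from the theorem (without the
  condition \<open>a = b\<close>).\<close>
definition shape_P :: bool where
  "shape_P \<longleftrightarrow> r \<in> Pset p f \<and> J = {i. i < f \<and> r (prv f i) \<noteq> p}"

definition shape_2 :: bool where
  "shape_2 \<longleftrightarrow> p = 2 \<and> (\<forall>i<f. r i = 2) \<and> J = {..<f}"

lemma cycle_index: "itr step f u = Some u \<Longrightarrow> fst u < f"
  using f1 step_index[of u] by (cases f) (auto split: option.splits)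

lemma cycle_forces_shape:
  assumes cy: "itr step f u = Some u"
  shows "shape_P \<or> shape_2"
  using cycle_structure[OF cy cycle_index[OF cy]] low_cycle_shape Jf
  unfolding shape_P_def shape_2_def by blast

text \<open>For an exceptional shape and \<open>i0 \<in> J\<close>, every cycle passes through the node
  \<open>(i0, exc_level i0)\<close>; removing this node therefore destroys all cycles.\<close>
definition exc_level :: "nat \<Rightarrow> nat" where
  "exc_level i0 = (if shape_P then lvl i0 else 2)"

lemma cycles_pass_through:
  assumes shape: "shape_P \<or> shape_2" and i0: "i0 \<in> J" and cy: "itr step f u = Some u"
  shows "\<exists>l<f. itr step l u = Some (i0, exc_level i0)"
proof -
  have i0f: "i0 < f" using i0 Jf by auto
  from cycle_structure[OF cy cycle_index[OF cy]] show ?thesis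
  proof
    assume br: "p = 2 \<and> (\<forall>j<f. j \<in> J \<and> r j = 2) \<and> (\<forall>j<f. \<exists>l<f. itr step l u = Some (j, 2))"
    have "\<not> shape_P"
    proof
      assume shape_P
      then have "r (prv f 0) \<noteq> p" using br f1 unfolding shape_P_def by auto
      then show False using br prv_lt[of 0 f] f1 by auto
    qed
    then have "exc_level i0 = 2" unfolding exc_level_def by simp
    then show ?thesis using br i0f by metis
  next
    assume br: "(\<forall>j<f. low_step j (lvl j) (lvl (prv f j))) \<and> (\<forall>j<f. \<exists>l<f. itr step l u = Some (j, lvl j))"
    have "\<not> shape_2"
    proof
      assume shape_2
      then have "lvl j = 0" if "j < f" for j using that unfolding shape_2_def lvl_def by simp
      then have "low_step i0 0 0" using br i0f prv_lt[OF i0f] by metis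
      then show False unfolding low_step_def by simp
    qed
    then show ?thesis using br i0f shape unfolding exc_level_def by simp
  qed
qed

text \<open>The coefficient that cannot be removed sits in degree \<open>p\<close> (resp. \<open>4\<close>).\<close>
lemma exc_level_degree:
  assumes shape: "shape_P \<or> shape_2" and i0: "i0 \<in> J"
  shows "exc_level i0 + hJ i0 = (if shape_P then p else 4)"
proof (cases shape_P)
  case True
  then have P: "r \<in> Pset p f" and JJ: "J = {i. i < f \<and> r (prv f i) \<noteq> p}"
    unfolding shape_P_def by auto
  have i0f: "i0 < f" using i0 Jf by auto
  define j where "j = prv f i0"
  have "j < f" unfolding j_def using prv_lt[OF i0f] .
  then have "r j \<in> {1, p - 1, p}" "r j \<in> {1, p - 1} \<longrightarrow> r (Suc j mod f) \<in> {p - 1, p}"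
    using P unfolding Pset_def by blast+
  moreover have "r j \<noteq> p" using i0 JJ unfolding j_def by auto
  moreover have "Suc j mod f = i0" unfolding j_def using Suc_prv_mod[OF i0f] .
  ultimately have "r i0 \<in> {p - 1, p}" by auto
  then show ?thesis using True i0 p2 unfolding exc_level_def lvl_def hJ_def by auto
next
  case False
  then have "shape_2" using shape by simp
  then have "r i0 = 2" using i0 Jf unfolding shape_2_def by auto
  then show ?thesis using False i0 unfolding exc_level_def hJ_def by simp
qed

end

section \<open>Changing the lift of the basis of the quotient\<close>

lemma frob_nth: "fps_nth (frob p g) n = (if p dvd n then fps_nth g (n div p) else 0)"
  by (simp add: frob_def)

lemma frob_one: "p > 0 \<Longrightarrow> frob p (1::'k::field fps) = 1"
  by (rule fps_ext) (auto simp: frob_nth elim!: dvdE)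

locale frobenius_extension = module scale
  for scale :: "'k::field fps \<Rightarrow> 'm::ab_group_add \<Rightarrow> 'm" +
  fixes p f :: nat and rA :: "nat \<Rightarrow> nat" and a :: 'k and rB :: "nat \<Rightarrow> nat" and b :: 'k
    and M :: "nat \<Rightarrow> 'm set" and phi :: "nat \<Rightarrow> 'm \<Rightarrow> 'm"
    and iota :: "nat \<Rightarrow> 'k fps \<Rightarrow> 'm" and prj :: "nat \<Rightarrow> 'm \<Rightarrow> 'k fps"
  assumes p0: "0 < p"
    and subM: "i < f \<Longrightarrow> subspace (M i)"
    and phiM: "i < f \<Longrightarrow> x \<in> M (prv f i) \<Longrightarrow> phi i x \<in> M i"
    and phi_add: "i < f \<Longrightarrow> x \<in> M (prv f i) \<Longrightarrow> y \<in> M (prv f i) \<Longrightarrow> phi i (x + y) = phi i x + phi i y"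
    and phi_scale: "i < f \<Longrightarrow> x \<in> M (prv f i) \<Longrightarrow> phi i (scale c x) = scale (frob p c) (phi i x)"
    and iota_hom: "i < f \<Longrightarrow> module_hom (*) scale (iota i)"
    and iota_inj: "i < f \<Longrightarrow> inj (iota i)"
    and iotaM: "i < f \<Longrightarrow> iota i g \<in> M i"
    and prj_add: "i < f \<Longrightarrow> x \<in> M i \<Longrightarrow> y \<in> M i \<Longrightarrow> prj i (x + y) = prj i x + prj i y"
    and prj_scale: "i < f \<Longrightarrow> x \<in> M i \<Longrightarrow> prj i (scale c x) = c * prj i x"
    and prj_surj: "i < f \<Longrightarrow> prj i ` M i = UNIV"
    and prj_kernel: "i < f \<Longrightarrow> {x \<in> M i. prj i x = 0} = range (iota i)"
    and phi_iota: "i < f \<Longrightarrow> phi i (iota (prv f i) g) = iota i (phiR p rB b i g)"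
    and prj_phi: "i < f \<Longrightarrow> x \<in> M (prv f i) \<Longrightarrow> prj i (phi i x) = phiR p rA a i (prj (prv f i) x)"

lemma is_extension_imp_frobenius_extension:
  assumes "is_extension p f rA a rB b scale M phi iota prj" and "0 < p"
  shows "frobenius_extension scale p f rA a rB b M phi iota prj"
  using assms unfolding is_extension_def frobenius_extension_def frobenius_extension_axioms_def
  by (intro conjI allI impI; simp add: image_subset_iff)

context frobenius_extension
begin

definition mulA :: "nat \<Rightarrow> 'k fps" where "mulA i = fps_const (coefi a i) * fps_X ^ rA i"
definition mulB :: "nat \<Rightarrow> 'k fps" where "mulB i = fps_const (coefi b i) * fps_X ^ rB i"

definition e :: "nat \<Rightarrow> 'm" where "e i = iota i 1"

lemma iota_e: "i < f \<Longrightarrow> iota i c = scale c (e i)"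
  using module_hom.scale[OF iota_hom, of i c 1] unfolding e_def by simp

lemma eM: "i < f \<Longrightarrow> scale c (e i) \<in> M i"
  using iotaM iota_e by metis

lemma prj_e:
  assumes i: "i < f"
  shows "prj i (scale c (e i)) = 0"
proof -
  have "iota i c \<in> {x \<in> M i. prj i x = 0}" unfolding prj_kernel[OF i] by (rule rangeI)
  then show ?thesis using iota_e[OF i] by simp
qed

lemma prj_diff:
  assumes i: "i < f" and x: "x \<in> M i" and y: "y \<in> M i"
  shows "prj i (x - y) = prj i x - prj i y"
proof -
  have "x - y \<in> M i" using subspace_diff[OF subM[OF i] x y] .
  then have "prj i (x - y + y) = prj i (x - y) + prj i y" using prj_add[OF i _ y] by blast
  then show ?thesis by simp
qed

lemma phi_e:
  assumes i: "i < f"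
  shows "phi i (e (prv f i)) = scale (mulB i) (e i)"
proof -
  have "phiR p rB b i 1 = mulB i" using frob_one[OF p0, where 'k='k] unfolding phiR_def mulB_def by simp
  then show ?thesis using phi_iota[OF i, of 1] iota_e[OF i] unfolding e_def[of "prv f i"] by simp
qed

definition fb0 :: "nat \<Rightarrow> 'm" where "fb0 i = (SOME m. m \<in> M i \<and> prj i m = 1)"

lemma fb0: "i < f \<Longrightarrow> fb0 i \<in> M i \<and> prj i (fb0 i) = 1"
  unfolding fb0_def by (rule someI_ex) (use prj_surj[of i] in \<open>metis UNIV_I imageE\<close>)

definition x0 :: "nat \<Rightarrow> 'k fps" where
  "x0 i = (SOME g. phi i (fb0 (prv f i)) - scale (mulA i) (fb0 i) = iota i g)"

lemma phi_fb0:
  assumes i: "i < f"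
  shows "phi i (fb0 (prv f i)) = scale (mulA i) (fb0 i) + scale (x0 i) (e i)"
proof -
  have pi: "prv f i < f" using prv_lt[OF i] .
  define Z where "Z = phi i (fb0 (prv f i)) - scale (mulA i) (fb0 i)"
  have m1: "phi i (fb0 (prv f i)) \<in> M i" using phiM[OF i] fb0[OF pi] by blast
  have m2: "scale (mulA i) (fb0 i) \<in> M i" using subspace_scale[OF subM[OF i]] fb0[OF i] by blast
  have "Z \<in> M i" unfolding Z_def using subspace_diff[OF subM[OF i] m1 m2] .
  moreover have "prj i Z = 0"
    using prj_diff[OF i m1 m2] prj_phi[OF i] fb0[OF pi] fb0[OF i] prj_scale[OF i] frob_one[OF p0, where 'k='k]
    unfolding Z_def phiR_def mulA_def by simp
  ultimately have "\<exists>g. Z = iota i g" using prj_kernel[OF i] by blast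
  then have "Z = iota i (x0 i)" unfolding x0_def Z_def by (rule someI_ex)
  then show ?thesis using iota_e[OF i] unfolding Z_def by (simp add: diff_eq_eq add.commute)
qed

lemma basis_of_lift:
  assumes i: "i < f" and fbM: "fb \<in> M i" and prj_fb: "prj i fb = 1" and m: "m \<in> M i"
  shows "\<exists>!cd. m = scale (fst cd) (e i) + scale (snd cd) fb"
proof -
  have fbs: "scale d fb \<in> M i" for d using subspace_scale[OF subM[OF i] fbM] .
  have prj_rep: "prj i (scale c (e i) + scale d fb) = d" for c d
    using prj_add[OF i eM[OF i] fbs] prj_e[OF i] prj_scale[OF i fbM] prj_fb by simp
  have "m - scale (prj i m) fb \<in> M i" using subspace_diff[OF subM[OF i] m fbs] .
  moreover have "prj i (m - scale (prj i m) fb) = 0"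
    using prj_diff[OF i m fbs] prj_scale[OF i fbM] prj_fb by simp
  ultimately obtain c where c: "m - scale (prj i m) fb = iota i c" using prj_kernel[OF i] by blast
  show ?thesis
  proof (rule ex1I[of _ "(c, prj i m)"])
    show "m = scale (fst (c, prj i m)) (e i) + scale (snd (c, prj i m)) fb"
      using c iota_e[OF i, of c] by (metis diff_add_cancel fst_conv snd_conv)
  next
    fix cd assume rep: "m = scale (fst cd) (e i) + scale (snd cd) fb"
    then have snd_cd: "snd cd = prj i m" using prj_rep by simp
    from rep have "scale (fst cd) (e i) = m - scale (snd cd) fb" by (simp add: eq_diff_eq)
    then have "iota i (fst cd) = iota i c" using c iota_e[OF i] snd_cd by simp
    then show "cd = (c, prj i m)" using snd_cd iota_inj[OF i]
      by (simp add: inj_eq prod_eq_iff)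
  qed
qed

lemma change_of_basis:
  "good_bases p f rA a rB b scale M phi iota e (\<lambda>i. fb0 i + scale (Y i) (e i))
     (\<lambda>i. x0 i - mulA i * Y i + mulB i * frob p (Y (prv f i)))"
  unfolding good_bases_def
proof (intro allI impI conjI)
  fix i assume i: "i < f"
  have pi: "prv f i < f" using prv_lt[OF i] .
  define fb where "fb j = fb0 j + scale (Y j) (e j)" for j
  have fbM: "fb j \<in> M j" if "j < f" for j
    unfolding fb_def using subspace_add[OF subM[OF that]] fb0[OF that] eM[OF that] by blast
  have prj_fb: "prj i (fb i) = 1"
    unfolding fb_def using prj_add[OF i] fb0[OF i] eM[OF i] prj_e[OF i] by simp
  show "e i \<in> M i" using eM[OF i, of 1] by simp
  show "fb0 i + scale (Y i) (e i) \<in> M i" using fbM[OF i] unfolding fb_def .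
  show "range (iota i) = range (\<lambda>c. scale c (e i))" using iota_e[OF i] by auto
  show "phi i (e (prv f i)) = scale (fps_const (coefi b i) * fps_X ^ rB i) (e i)"
    using phi_e[OF i] unfolding mulB_def .
  show "\<forall>m\<in>M i. \<exists>!cd. m = scale (fst cd) (e i) + scale (snd cd) (fb0 i + scale (Y i) (e i))"
    using basis_of_lift[OF i fbM[OF i] prj_fb] unfolding fb_def by blast
  have "phi i (fb (prv f i)) = phi i (fb0 (prv f i)) + phi i (scale (Y (prv f i)) (e (prv f i)))"
    unfolding fb_def using phi_add[OF i] fb0[OF pi] eM[OF pi] by blast
  also have "\<dots> = scale (mulA i) (fb0 i) + scale (x0 i + frob p (Y (prv f i)) * mulB i) (e i)"
    using phi_fb0[OF i] phi_scale[OF i] phi_e[OF i] eM[OF pi, of 1]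
    by (simp add: scale_left_distrib)
  also have "\<dots> = scale (mulA i) (fb i) + scale (x0 i - mulA i * Y i + mulB i * frob p (Y (prv f i))) (e i)"
    unfolding fb_def by (simp add: algebra_simps scale_left_distrib scale_right_distrib scale_left_diff_distrib)
  finally show "phi i (fb0 (prv f i) + scale (Y (prv f i)) (e (prv f i)))
      = scale (fps_const (coefi a i) * fps_X ^ rA i) (fb0 i + scale (Y i) (e i))
        + scale (x0 i - mulA i * Y i + mulB i * frob p (Y (prv f i))) (e i)"
    unfolding fb_def mulA_def .
qed

end

section \<open>Killing the coefficients of the extension class\<close>

lemma split_off_monomial:
  fixes x :: "'k::comm_ring_1 fps"
  assumes "d \<le> N" and "\<And>n. d \<le> n \<Longrightarrow> n \<noteq> N \<Longrightarrow> fps_nth x n = 0"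
  shows "\<exists>q c. deg_less q d \<and> x = q + fps_const c * fps_X ^ N"
proof -
  define q where "q = Abs_fps (\<lambda>n. if n < d then fps_nth x n else 0)"
  have "x = q + fps_const (fps_nth x N) * fps_X ^ N"
    by (rule fps_ext) (use assms in \<open>auto simp: q_def\<close>)
  moreover have "deg_less q d" unfolding deg_less_def q_def by simp
  ultimately show ?thesis by blast
qed

text \<open>With \<open>x0\<close> the coordinates for some initial choice of bases, \<open>twisted y\<close> are the
  coordinates after the change of basis given by the coefficients \<open>y (i, k)\<close> of \<open>Y i\<close>.\<close>
locale coefficient_problem = reduction_graph p f r J
  for p f :: nat and r :: "nat \<Rightarrow> nat" and J :: "nat set" +
  fixes a b :: "'k::field" and x0 :: "nat \<Rightarrow> 'k fps"
  assumes a0: "a \<noteq> 0"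
begin

definition twisted :: "(nat \<times> nat \<Rightarrow> 'k) \<Rightarrow> nat \<Rightarrow> 'k fps" where
  "twisted y i = x0 i - fps_const (coefi a i) * fps_X ^ hJ i * Abs_fps (\<lambda>k. y (i, k))
     + fps_const (coefi b i) * fps_X ^ (r i - hJ i) * frob p (Abs_fps (\<lambda>k. y (prv f i, k)))"

definition target :: "nat \<times> nat \<Rightarrow> 'k" where
  "target n = fps_nth (x0 (fst n)) (snd n + hJ (fst n)) / coefi a (fst n)"

definition ratio :: "nat \<times> nat \<Rightarrow> 'k" where
  "ratio n = coefi b (fst n) / coefi a (fst n)"

lemma twisted_coeff_vanishes:
  assumes i: "i < f" and hn: "hJ i \<le> n"
    and rec: "y (i, n - hJ i) = target (i, n - hJ i)
               + ratio (i, n - hJ i) * (case step (i, n - hJ i) of None \<Rightarrow> 0 | Some m \<Rightarrow> y m)"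
  shows "fps_nth (twisted y i) n = 0"
proof -
  define k where "k = n - hJ i"
  have n: "n = k + hJ i" unfolding k_def using hn by simp
  define T where "T = (if n < r i - hJ i then 0
     else if p dvd (n - (r i - hJ i)) then y (prv f i, (n - (r i - hJ i)) div p) else 0)"
  have "(case step (i, k) of None \<Rightarrow> 0 | Some m \<Rightarrow> y m) = T"
    unfolding step_def T_def using i n by auto
  then have "y (i, k) = target (i, k) + ratio (i, k) * T" using rec unfolding k_def by simp
  moreover have "fps_nth (twisted y i) n = fps_nth (x0 i) n - coefi a i * y (i, k) + coefi b i * T"
    unfolding twisted_def T_def using hn k_def
    by (simp add: mult.assoc fps_X_power_mult_nth frob_nth)
  moreover have "coefi a i \<noteq> 0" using a0 by (simp add: coefi_def)
  ultimately show ?thesis unfolding target_def ratio_def using n by (simp add: field_simps)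
qed

lemma cycle_ratio:
  assumes cy: "itr step f u = Some u"
  shows "cycle_mult step ratio f u = b / a"
proof -
  have "cycle_mult step ratio f u = (\<Prod>l<f. (\<lambda>j. coefi b j / coefi a j) (fst (the (itr step l u))))"
    unfolding cycle_mult_def ratio_def by simp
  also have "\<dots> = coefi b 0 / coefi a 0"
    by (rule cycle_prod_at_zero[OF cy cycle_index[OF cy]]) (simp add: coefi_def)
  finally show ?thesis by (simp add: coefi_def)
qed

lemma generic_solution:
  assumes "\<not> (a = b \<and> (shape_P \<or> shape_2))"
  shows "\<exists>y. \<forall>i<f. deg_less (twisted y i) (hJ i)"
proof -
  have "cycle_mult step ratio f u \<noteq> 1" if "itr step f u = Some u" for u
    using cycle_ratio[OF that] cycle_forces_shape[OF that] assms a0 by (auto simp: field_simps)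
  then obtain y where y: "\<forall>n. y n = target n + ratio n * (case step n of None \<Rightarrow> 0 | Some m \<Rightarrow> y m)"
    using affine_recursion_solvable[of f step ratio target] f1 step_settles by auto
  have "fps_nth (twisted y i) n = 0" if "i < f" "hJ i \<le> n" for i n
    by (rule twisted_coeff_vanishes[OF that y[rule_format]])
  then show ?thesis unfolding deg_less_def by blast
qed

text \<open>Exceptional case: cutting the graph at \<open>(i0, exc_level i0)\<close> kills every coefficient
  except the one in degree \<open>p\<close> (resp. \<open>4\<close>) of \<open>twisted y i0\<close>.\<close>
lemma exceptional_solution:
  assumes shape: "shape_P \<or> shape_2" and i0: "i0 \<in> J"
  shows "\<exists>y q c. (\<forall>i<f. i \<noteq> i0 \<longrightarrow> deg_less (twisted y i) (hJ i)) \<and> deg_less q (hJ i0)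
           \<and> twisted y i0 = q + fps_const c * fps_X ^ (if shape_P then p else 4)"
proof -
  define v where "v = (i0, exc_level i0)"
  define G' where "G' = step(v := None)"
  have sub: "G' n \<noteq> None \<Longrightarrow> G' n = step n" for n unfolding G'_def by (cases "n = v") auto
  have "itr G' f u \<noteq> Some u" for u
    unfolding G'_def v_def by (rule cut_destroys_cycles) (rule cycles_pass_through[OF shape i0])
  then obtain y where y: "\<forall>n. y n = target n + ratio n * (case G' n of None \<Rightarrow> 0 | Some m \<Rightarrow> y m)"
    using affine_recursion_solvable[of f G' ratio target] f1 settles_restrict[OF sub step_settles]
    by auto
  have van: "fps_nth (twisted y i) n = 0" if "i < f" "hJ i \<le> n" "(i, n - hJ i) \<noteq> v" for i n
  proof (rule twisted_coeff_vanishes[OF that(1,2)])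
    have "G' (i, n - hJ i) = step (i, n - hJ i)" using that(3) unfolding G'_def by simp
    then show "y (i, n - hJ i) = target (i, n - hJ i)
        + ratio (i, n - hJ i) * (case step (i, n - hJ i) of None \<Rightarrow> 0 | Some m \<Rightarrow> y m)"
      using y[rule_format, of "(i, n - hJ i)"] by simp
  qed
  have i0f: "i0 < f" using i0 Jf by auto
  define N where "N = (if shape_P then p else 4)"
  have N: "exc_level i0 + hJ i0 = N" using exc_level_degree[OF shape i0] unfolding N_def .
  have "fps_nth (twisted y i0) n = 0" if "hJ i0 \<le> n" "n \<noteq> N" for n
  proof (rule van[OF i0f that(1)])
    show "(i0, n - hJ i0) \<noteq> v" using N that unfolding v_def by auto
  qed
  moreover have "hJ i0 \<le> N" using N by simp
  ultimately obtain q c where "deg_less q (hJ i0)" "twisted y i0 = q + fps_const c * fps_X ^ N"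
    using split_off_monomial[of "hJ i0" N "twisted y i0"] by blast
  moreover have "\<forall>i<f. i \<noteq> i0 \<longrightarrow> deg_less (twisted y i) (hJ i)"
    using van unfolding deg_less_def v_def by auto
  ultimately show ?thesis unfolding N_def by blast
qed

end

theorem mainTheorem8:
  fixes p f :: nat and r :: "nat \<Rightarrow> nat" and J :: "nat set"
    and a b :: "'k::{field, finite}"
    and scale :: "'k fps \<Rightarrow> 'm::ab_group_add \<Rightarrow> 'm"
    and M :: "nat \<Rightarrow> 'm set" and phi :: "nat \<Rightarrow> 'm \<Rightarrow> 'm"
    and iota :: "nat \<Rightarrow> 'k fps \<Rightarrow> 'm" and prj :: "nat \<Rightarrow> 'm \<Rightarrow> 'k fps"
  defines "h \<equiv> (\<lambda>i. if i \<in> J then r i else 0)"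
  defines "exc1 \<equiv> r \<in> Pset p f \<and> J = {i. i < f \<and> r (prv f i) \<noteq> p} \<and> a = b"
  defines "exc2 \<equiv> p = 2 \<and> (\<forall>i<f. r i = 2) \<and> J = {..<f} \<and> a = b"
  assumes "prime p" and "CHAR('k) = p" and "f \<ge> 1"
    and "\<exists>d. card (UNIV :: 'k set) = p ^ (f * d)"
    and "\<forall>i<f. 1 \<le> r i \<and> r i \<le> p"
    and "J \<subseteq> {..<f}"
    and "a \<noteq> 0" and "b \<noteq> 0"
    and "is_extension p f h a (\<lambda>i. r i - h i) b scale M phi iota prj"
  shows "(\<not> exc1 \<and> \<not> exc2 \<longrightarrow>
           (\<exists>e fb x. good_bases p f h a (\<lambda>i. r i - h i) b scale M phi iota e fb x
              \<and> (\<forall>i<f. deg_less (x i) (h i))))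
       \<and> ((exc1 \<or> exc2) \<longrightarrow> (\<forall>i0\<in>J.
           (\<exists>e fb x q c. good_bases p f h a (\<lambda>i. r i - h i) b scale M phi iota e fb x
              \<and> (\<forall>i<f. i \<noteq> i0 \<longrightarrow> deg_less (x i) (h i))
              \<and> deg_less q (h i0)
              \<and> x i0 = q + fps_const c * fps_X ^ (if exc1 then p else 4))))"
proof -
  have p2: "2 \<le> p" using \<open>prime p\<close> prime_ge_2_nat by blast
  interpret G: reduction_graph p f r J using p2 assms(6,8,9) by unfold_locales auto
  have hJ: "G.hJ = h" unfolding h_def by (rule ext) (simp add: G.hJ_def)
  interpret E: frobenius_extension scale p f h a "\<lambda>i. r i - h i" b M phi iota prj
    using is_extension_imp_frobenius_extension[OF assms(12)] p2 by simp
  interpret C: coefficient_problem p f r J a b E.x0 by unfold_locales (rule \<open>a \<noteq> 0\<close>)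
  have good: "good_bases p f h a (\<lambda>i. r i - h i) b scale M phi iota E.e
      (\<lambda>i. E.fb0 i + scale (Abs_fps (\<lambda>k. y (i, k))) (E.e i)) (C.twisted y)" for y
    using E.change_of_basis[of "\<lambda>i. Abs_fps (\<lambda>k. y (i, k))"]
    unfolding C.twisted_def E.mulA_def E.mulB_def hJ by (simp add: mult.assoc)
  have exc1: "exc1 \<longleftrightarrow> a = b \<and> G.shape_P" and exc2: "exc2 \<longleftrightarrow> a = b \<and> G.shape_2"
    unfolding exc1_def exc2_def G.shape_P_def G.shape_2_def by auto
  show ?thesis
  proof (intro conjI impI ballI)
    assume "\<not> exc1 \<and> \<not> exc2"
    then obtain y where "\<forall>i<f. deg_less (C.twisted y i) (h i)"
      using C.generic_solution exc1 exc2 hJ by auto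
    then show "\<exists>e fb x. good_bases p f h a (\<lambda>i. r i - h i) b scale M phi iota e fb x
        \<and> (\<forall>i<f. deg_less (x i) (h i))" using good by blast
  next
    fix i0 assume "exc1 \<or> exc2" and i0: "i0 \<in> J"
    then have shape: "G.shape_P \<or> G.shape_2" and "a = b" using exc1 exc2 by auto
    then have N: "(if G.shape_P then p else 4) = (if exc1 then p else (4::nat))" using exc1 by simp
    obtain y q c where "\<forall>i<f. i \<noteq> i0 \<longrightarrow> deg_less (C.twisted y i) (h i)"
        "deg_less q (h i0)" "C.twisted y i0 = q + fps_const c * fps_X ^ (if exc1 then p else 4)"
      using C.exceptional_solution[OF shape i0] unfolding N hJ by blast
    then show "\<exists>e fb x q c. good_bases p f h a (\<lambda>i. r i - h i) b scale M phi iota e fb x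
        \<and> (\<forall>i<f. i \<noteq> i0 \<longrightarrow> deg_less (x i) (h i)) \<and> deg_less q (h i0)
        \<and> x i0 = q + fps_const c * fps_X ^ (if exc1 then p else 4)" using good by blast
  qed
qed

end
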